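(* Let $1\le \nu<\infty$ and let $w,\phi$ be entire functions. The weighted composition operator $W_{w,\phi}f=w\cdot(f\circ\phi)$ is an invertible bounded operator on $\mathcal{F}^\nu$ if and only if $\phi(z)=az+b$ with $|a|=1$, $b\in\mathbb{C}$, and $w(z)=w(0)e^{-\overline{b}az}$ for all $z\in\mathbb{C}$, with $w(0)\neq 0$.
   Context: For $1\le\nu<\infty$, the Fock space $\mathcal{F}^\nu$ is the space of entire functions $f:\mathbb{C}\to\mathbb{C}$ with $\|f\|_\nu:=\left(\frac{\nu}{2\pi}\int_{\mathbb{C}}|f(z)|^\nu e^{-\nu|z|^2/2}\,dm(z)\right)^{1/\nu}<\infty$, where $m$ is Lebesgue area measure. For entire $w,\phi$, the weighted composition operator is $W_{w,\phi}f=w\,(f\circ\phi)$. *)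

theory Defs
  imports "HOL-Complex_Analysis.Complex_Analysis"
begin

definition fock_integral :: "real \<Rightarrow> (complex \<Rightarrow> complex) \<Rightarrow> ennreal" where
  "fock_integral \<nu> f =
     (\<integral>\<^sup>+ z. ennreal (norm (f z) powr \<nu> * exp (- \<nu> * (norm z)\<^sup>2 / 2)) \<partial>lborel)"

definition fock_space :: "real \<Rightarrow> (complex \<Rightarrow> complex) set" where
  "fock_space \<nu> = {f. f holomorphic_on UNIV \<and> fock_integral \<nu> f < \<infinity>}"

definition fock_norm :: "real \<Rightarrow> (complex \<Rightarrow> complex) \<Rightarrow> real" where
  "fock_norm \<nu> f = ((\<nu> / (2 * pi)) * enn2real (fock_integral \<nu> f)) powr (1 / \<nu>)"

definition wcomp :: "(complex \<Rightarrow> complex) \<Rightarrow> (complex \<Rightarrow> complex)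
                      \<Rightarrow> (complex \<Rightarrow> complex) \<Rightarrow> (complex \<Rightarrow> complex)" where
  "wcomp w \<phi> f = (\<lambda>z. w z * f (\<phi> z))"

definition fock_bounded_op ::
  "real \<Rightarrow> ((complex \<Rightarrow> complex) \<Rightarrow> (complex \<Rightarrow> complex)) \<Rightarrow> bool" where
  "fock_bounded_op \<nu> T \<longleftrightarrow>
     (\<forall>f\<in>fock_space \<nu>. T f \<in> fock_space \<nu>) \<and>
     (\<forall>f\<in>fock_space \<nu>. \<forall>g\<in>fock_space \<nu>. T (\<lambda>z. f z + g z) = (\<lambda>z. T f z + T g z)) \<and>
     (\<forall>c. \<forall>f\<in>fock_space \<nu>. T (\<lambda>z. c * f z) = (\<lambda>z. c * T f z)) \<and>
     (\<exists>C. \<forall>f\<in>fock_space \<nu>. fock_norm \<nu> (T f) \<le> C * fock_norm \<nu> f)"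

definition fock_invertible_op ::
  "real \<Rightarrow> ((complex \<Rightarrow> complex) \<Rightarrow> (complex \<Rightarrow> complex)) \<Rightarrow> bool" where
  "fock_invertible_op \<nu> T \<longleftrightarrow>
     fock_bounded_op \<nu> T \<and>
     (\<exists>S. fock_bounded_op \<nu> S \<and>
          (\<forall>f\<in>fock_space \<nu>. S (T f) = f \<and> T (S f) = f))"

end

theory Submission
  imports Defs "HOL-Probability.Distributions" "HOL-Real_Asymp.Real_Asymp"
begin

text \<open>Put M(z) = |w(z)| exp((|phi(z)|^2 - |z|^2)/2). The sub-mean value property of |f|^nu,
  transported to every point by the isometric weighted translations of the Fock space, gives the
  pointwise estimate |f(z)| exp(-|z|^2/2) <= K ||f||. Testing the operator and its inverse on the
  kernels exp(conj(zeta) u), whose norms are exp(|zeta|^2/2) ||1||, shows that M is bounded above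
  and below by positive constants. Writing w = exp g, the resulting bound
  |phi|^2 + 2 Re g <= |z|^2 + C, averaged over circles (where Re g has mean Re g(0)), feeds
  Cauchy's estimates and forces phi(z) = a z + b. Then w(z) exp(a conj(b) z) exp((|a|^2 - 1)|z|^2/2)
  is bounded above and below, so Liouville's theorem yields |a| = 1 and w(z) = w(0) exp(-conj(b) a z).
  Conversely, for such w and phi the substitution u = a z + b, which preserves Lebesgue measure,
  shows that the operator scales the Fock integral by a constant, and its inverse has the same form.\<close>

lemma borel_measurable_compose_continuous:
  fixes S :: "'a::topological_space \<Rightarrow> 'b::topological_space"
  assumes "H \<in> borel_measurable borel" "continuous_on UNIV S"
  shows "(\<lambda>z. H (S z)) \<in> borel_measurable borel"
  using measurable_compose[OF borel_measurable_continuous_onI[OF assms(2)] assms(1)] by (simp add: o_def)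

lemma borel_measurable_continuous_pair_lborel:
  fixes g :: "real \<times> real \<Rightarrow> 'a::topological_space"
  assumes "continuous_on UNIV g"
  shows "g \<in> borel_measurable (lborel \<Otimes>\<^sub>M lborel)"
proof -
  have "sets (lborel \<Otimes>\<^sub>M lborel) = sets (borel :: (real \<times> real) measure)"
    by (metis borel_prod sets_lborel sets_pair_measure_cong)
  then show ?thesis
    using measurable_cong_sets borel_measurable_continuous_onI[OF assms] by blast
qed

lemma lborel_complex_eq_distr_pair:
  "(lborel :: complex measure) = distr (lborel \<Otimes>\<^sub>M lborel) borel (\<lambda>(x, y). Complex x y)"
proof (rule lborel_eqI)
  fix l u :: complex
  assume lu: "\<And>b. b \<in> Basis \<Longrightarrow> l \<bullet> b \<le> u \<bullet> b"
  have "(\<lambda>(x, y). Complex x y) -` box l u \<inter> space (lborel \<Otimes>\<^sub>M lborel)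
      = {Re l<..<Re u} \<times> {Im l<..<Im u}"
    by (auto simp: box_def Basis_complex_def space_pair_measure)
  moreover have "(\<lambda>(x, y). Complex x y) \<in> borel_measurable (lborel \<Otimes>\<^sub>M lborel)"
    by (rule borel_measurable_continuous_pair_lborel) (auto simp: case_prod_beta' intro!: continuous_intros)
  moreover have "Re l \<le> Re u" "Im l \<le> Im u"
    using lu[of 1] lu[of \<i>] by (auto simp: Basis_complex_def)
  ultimately show "emeasure (distr (lborel \<Otimes>\<^sub>M lborel) borel (\<lambda>(x, y). Complex x y)) (box l u) =
      ennreal (\<Prod>b\<in>Basis. (u - l) \<bullet> b)"
    by (simp add: emeasure_distr lborel.emeasure_pair_measure_Times Basis_complex_def ennreal_mult)
qed simp

lemma nn_integral_lborel_complex: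
  assumes [measurable]: "H \<in> borel_measurable (borel :: complex measure)"
  shows "(\<integral>\<^sup>+z. H z \<partial>lborel) = (\<integral>\<^sup>+x. (\<integral>\<^sup>+y. H (Complex x y) \<partial>lborel) \<partial>lborel)"
proof -
  have [measurable]: "(\<lambda>(x, y). Complex x y) \<in> borel_measurable (lborel \<Otimes>\<^sub>M lborel)"
    by (rule borel_measurable_continuous_pair_lborel) (auto simp: case_prod_beta' intro!: continuous_intros)
  have "(\<integral>\<^sup>+z. H z \<partial>lborel) = (\<integral>\<^sup>+p. H (case p of (x, y) \<Rightarrow> Complex x y) \<partial>(lborel \<Otimes>\<^sub>M lborel))"
    by (subst lborel_complex_eq_distr_pair) (rule nn_integral_distr; simp)
  also have "\<dots> = (\<integral>\<^sup>+x. (\<integral>\<^sup>+y. H (Complex x y) \<partial>lborel) \<partial>lborel)"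
    by (subst lborel.nn_integral_fst[symmetric]) (simp_all add: case_prod_beta')
  finally show ?thesis .
qed

lemma nn_integral_shear_Im:
  assumes Hm: "H \<in> borel_measurable (borel :: complex measure)"
  shows "(\<integral>\<^sup>+z. H (Complex (Re z) (Im z + c * Re z)) \<partial>lborel) = (\<integral>\<^sup>+z. H z \<partial>lborel)"
proof -
  have "(\<lambda>z. H (Complex (Re z) (Im z + c * Re z))) \<in> borel_measurable borel"
    by (rule borel_measurable_compose_continuous[OF Hm]) (intro continuous_intros)
  then have "(\<integral>\<^sup>+z. H (Complex (Re z) (Im z + c * Re z)) \<partial>lborel)
      = (\<integral>\<^sup>+x. (\<integral>\<^sup>+y. H (Complex x (y + c * x)) \<partial>lborel) \<partial>lborel)"
    by (simp add: nn_integral_lborel_complex)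
  also have "\<dots> = (\<integral>\<^sup>+x. (\<integral>\<^sup>+y. H (Complex x y) \<partial>lborel) \<partial>lborel)"
  proof (rule nn_integral_cong)
    fix x :: real
    have "(\<lambda>y. H (Complex x y)) \<in> borel_measurable borel"
      by (rule borel_measurable_compose_continuous[OF Hm]) (intro continuous_intros)
    from nn_integral_real_affine[OF this, of 1 "c * x"]
    show "(\<integral>\<^sup>+y. H (Complex x (y + c * x)) \<partial>lborel) = (\<integral>\<^sup>+y. H (Complex x y) \<partial>lborel)"
      by (simp add: add.commute)
  qed
  also have "\<dots> = (\<integral>\<^sup>+z. H z \<partial>lborel)"
    using nn_integral_lborel_complex[OF Hm] by simp
  finally show ?thesis .
qed

lemma nn_integral_shear_Re:
  assumes Hm: "H \<in> borel_measurable (borel :: complex measure)"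
  shows "(\<integral>\<^sup>+z. H (Complex (Re z + c * Im z) (Im z)) \<partial>lborel) = (\<integral>\<^sup>+z. H z \<partial>lborel)"
proof -
  have "(\<lambda>z. H (Complex (Re z + c * Im z) (Im z))) \<in> borel_measurable borel"
    by (rule borel_measurable_compose_continuous[OF Hm]) (intro continuous_intros)
  then have "(\<integral>\<^sup>+z. H (Complex (Re z + c * Im z) (Im z)) \<partial>lborel)
      = (\<integral>\<^sup>+x. (\<integral>\<^sup>+y. H (Complex (x + c * y) y) \<partial>lborel) \<partial>lborel)"
    by (simp add: nn_integral_lborel_complex)
  also have "\<dots> = (\<integral>\<^sup>+y. (\<integral>\<^sup>+x. H (Complex (x + c * y) y) \<partial>lborel) \<partial>lborel)"
  proof -
    have "(\<lambda>p. H (Complex (fst p + c * snd p) (snd p))) \<in> borel_measurable (lborel \<Otimes>\<^sub>M lborel)"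
      by (rule measurable_compose[OF borel_measurable_continuous_pair_lborel Hm]) (intro continuous_intros)
    then show ?thesis
      using lborel_pair.Fubini'[of "\<lambda>x y. H (Complex (x + c * y) y)"] by (simp add: case_prod_beta')
  qed
  also have "\<dots> = (\<integral>\<^sup>+y. (\<integral>\<^sup>+x. H (Complex x y) \<partial>lborel) \<partial>lborel)"
  proof (rule nn_integral_cong)
    fix y :: real
    have "(\<lambda>x. H (Complex x y)) \<in> borel_measurable borel"
      by (rule borel_measurable_compose_continuous[OF Hm]) (intro continuous_intros)
    from nn_integral_real_affine[OF this, of 1 "c * y"]
    show "(\<integral>\<^sup>+x. H (Complex (x + c * y) y) \<partial>lborel) = (\<integral>\<^sup>+x. H (Complex x y) \<partial>lborel)"
      by (simp add: add.commute)
  qed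
  also have "\<dots> = (\<integral>\<^sup>+x. (\<integral>\<^sup>+y. H (Complex x y) \<partial>lborel) \<partial>lborel)"
  proof -
    have "(\<lambda>p. H (Complex (fst p) (snd p))) \<in> borel_measurable (lborel \<Otimes>\<^sub>M lborel)"
      by (rule measurable_compose[OF borel_measurable_continuous_pair_lborel Hm]) (intro continuous_intros)
    then show ?thesis
      using lborel_pair.Fubini'[of "\<lambda>x y. H (Complex x y)"] by (simp add: case_prod_beta')
  qed
  also have "\<dots> = (\<integral>\<^sup>+z. H z \<partial>lborel)"
    using nn_integral_lborel_complex[OF Hm] by simp
  finally show ?thesis .
qed

text \<open>A rotation by the angle t is the product of shears with parameters -tan(t/2), sin t, -tan(t/2);
  here -tan(t/2) = - Im a / (1 + Re a).\<close>
lemma mult_unit_eq_shears: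
  fixes a z :: complex
  assumes "norm a = 1" "Re a \<noteq> -1"
  defines "\<alpha> \<equiv> - Im a / (1 + Re a)"
  shows "a * z = (\<lambda>z. Complex (Re z + \<alpha> * Im z) (Im z))
                  ((\<lambda>z. Complex (Re z) (Im z + Im a * Re z))
                  ((\<lambda>z. Complex (Re z + \<alpha> * Im z) (Im z)) z))"
proof -
  have unit: "(Re a)\<^sup>2 + (Im a)\<^sup>2 = 1"
    using assms(1) by (simp add: cmod_def)
  have d: "1 + Re a \<noteq> 0"
    using assms(2) by linarith
  have e1: "1 + \<alpha> * Im a = Re a"
    using unit d unfolding \<alpha>_def by (simp add: field_simps power2_eq_square; smt (verit))
  have e2: "2 * \<alpha> + \<alpha>\<^sup>2 * Im a = - Im a"
  proof -
    have "2 * \<alpha> + \<alpha>\<^sup>2 * Im a = \<alpha> * (1 + (1 + \<alpha> * Im a))"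
      by (simp add: algebra_simps power2_eq_square)
    also have "\<dots> = - Im a"
      using e1 d unfolding \<alpha>_def by simp
    finally show ?thesis .
  qed
  have "Re z + \<alpha> * Im z + \<alpha> * (Im z + Im a * (Re z + \<alpha> * Im z))
      = Re z * (1 + \<alpha> * Im a) + Im z * (2 * \<alpha> + \<alpha>\<^sup>2 * Im a)"
    "Im z + Im a * (Re z + \<alpha> * Im z) = Im z * (1 + \<alpha> * Im a) + Im a * Re z"
    by (simp_all add: algebra_simps power2_eq_square)
  then show ?thesis
    unfolding e1 e2 by (simp add: complex_eq_iff algebra_simps)
qed

lemma nn_integral_mult_unit_Re_ne_minus_one:
  fixes a :: complex
  assumes Hm: "H \<in> borel_measurable (borel :: complex measure)"
    and a: "norm a = 1" "Re a \<noteq> -1"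
  shows "(\<integral>\<^sup>+z. H (a * z) \<partial>lborel) = (\<integral>\<^sup>+z. H z \<partial>lborel)"
proof -
  define \<alpha> where "\<alpha> = - Im a / (1 + Re a)"
  define Sx where "Sx = (\<lambda>z. Complex (Re z + \<alpha> * Im z) (Im z))"
  define Sy where "Sy = (\<lambda>z. Complex (Re z) (Im z + Im a * Re z))"
  have m1: "(\<lambda>z. H (Sx z)) \<in> borel_measurable borel"
    unfolding Sx_def by (rule borel_measurable_compose_continuous[OF Hm]) (intro continuous_intros)
  have m2: "(\<lambda>z. H (Sx (Sy z))) \<in> borel_measurable borel"
    unfolding Sy_def by (rule borel_measurable_compose_continuous[OF m1]) (intro continuous_intros)
  have "(\<integral>\<^sup>+z. H (a * z) \<partial>lborel) = (\<integral>\<^sup>+z. H (Sx (Sy (Sx z))) \<partial>lborel)"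
    using mult_unit_eq_shears[OF a] unfolding Sx_def Sy_def \<alpha>_def by simp
  also have "\<dots> = (\<integral>\<^sup>+z. H (Sx (Sy z)) \<partial>lborel)"
    using nn_integral_shear_Re[OF m2, of \<alpha>] unfolding Sx_def by simp
  also have "\<dots> = (\<integral>\<^sup>+z. H (Sx z) \<partial>lborel)"
    using nn_integral_shear_Im[OF m1, of "Im a"] unfolding Sy_def by simp
  also have "\<dots> = (\<integral>\<^sup>+z. H z \<partial>lborel)"
    using nn_integral_shear_Re[OF Hm, of \<alpha>] unfolding Sx_def by simp
  finally show ?thesis .
qed

lemma nn_integral_mult_unit:
  fixes a :: complex
  assumes Hm: "H \<in> borel_measurable (borel :: complex measure)" and a: "norm a = 1"
  shows "(\<integral>\<^sup>+z. H (a * z) \<partial>lborel) = (\<integral>\<^sup>+z. H z \<partial>lborel)"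
proof (cases "Re a = -1")
  case True
  then have "a = \<i> * \<i>"
    using a by (simp add: cmod_def complex_eq_iff)
  then have "(\<integral>\<^sup>+z. H (a * z) \<partial>lborel) = (\<integral>\<^sup>+z. H (\<i> * (\<i> * z)) \<partial>lborel)"
    by (simp add: mult.assoc)
  also have "\<dots> = (\<integral>\<^sup>+z. H (\<i> * z) \<partial>lborel)"
    by (rule nn_integral_mult_unit_Re_ne_minus_one[of "\<lambda>z. H (\<i> * z)"])
       (auto intro: borel_measurable_compose_continuous[OF Hm] continuous_intros)
  also have "\<dots> = (\<integral>\<^sup>+z. H z \<partial>lborel)"
    by (rule nn_integral_mult_unit_Re_ne_minus_one[OF Hm]) auto
  finally show ?thesis .
qed (use nn_integral_mult_unit_Re_ne_minus_one[OF Hm a] in simp)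

lemma nn_integral_affine_isometry:
  fixes a b :: complex
  assumes Hm: "H \<in> borel_measurable (borel :: complex measure)" and a: "norm a = 1"
  shows "(\<integral>\<^sup>+z. H (a * z + b) \<partial>lborel) = (\<integral>\<^sup>+z. H z \<partial>lborel)"
proof -
  have "(\<lambda>z. H (z + b)) \<in> borel_measurable borel"
    by (rule borel_measurable_compose_continuous[OF Hm]) (intro continuous_intros)
  from nn_integral_mult_unit[OF this a]
  have "(\<integral>\<^sup>+z. H (a * z + b) \<partial>lborel) = (\<integral>\<^sup>+z. H (b + z) \<partial>lborel)"
    by (simp add: add.commute)
  also have "\<dots> = (\<integral>\<^sup>+z. H z \<partial>distr lborel borel ((+) b))"
    by (rule nn_integral_distr[symmetric]) (use Hm in auto)
  also have "\<dots> = (\<integral>\<^sup>+z. H z \<partial>lborel)"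
    by (simp add: lborel_distr_plus)
  finally show ?thesis .
qed

lemma nn_integral_gaussian_finite:
  fixes c :: real assumes c: "c > 0"
  shows "(\<integral>\<^sup>+t. ennreal (exp (- c * t\<^sup>2)) \<partial>lborel) < \<infinity>"
proof -
  define \<sigma> where "\<sigma> = sqrt (1 / (2 * c))"
  have \<sigma>: "\<sigma> > 0" "\<sigma>\<^sup>2 = 1 / (2 * c)"
    using c unfolding \<sigma>_def by simp_all
  interpret prob_space "density lborel (normal_density 0 \<sigma>)"
    using prob_space_normal_density \<sigma> by blast
  have eq: "exp (- c * t\<^sup>2) = sqrt (2 * pi * \<sigma>\<^sup>2) * normal_density 0 \<sigma> t" for t
    unfolding normal_density_def \<sigma>(2) using c by (simp add: field_simps)
  have "(\<integral>\<^sup>+t. ennreal (exp (- c * t\<^sup>2)) \<partial>lborel)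
      = (\<integral>\<^sup>+t. ennreal (sqrt (2 * pi * \<sigma>\<^sup>2)) * ennreal (normal_density 0 \<sigma> t) \<partial>lborel)"
    by (intro nn_integral_cong) (metis eq ennreal_mult normal_density_nonneg real_sqrt_ge_zero
        mult_nonneg_nonneg pi_ge_zero zero_le_power2 zero_le_numeral)
  also have "\<dots> = ennreal (sqrt (2 * pi * \<sigma>\<^sup>2)) * (\<integral>\<^sup>+t. ennreal (normal_density 0 \<sigma> t) \<partial>lborel)"
    by (rule nn_integral_cmult) simp
  also have "\<dots> = ennreal (sqrt (2 * pi * \<sigma>\<^sup>2))"
    using emeasure_space_1 by (simp add: emeasure_density)
  finally show ?thesis
    by simp
qed

lemma nn_integral_gaussian_complex_finite:
  fixes c :: real assumes c: "c > 0"
  shows "(\<integral>\<^sup>+(z::complex). ennreal (exp (- c * (norm z)\<^sup>2)) \<partial>lborel) < \<infinity>"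
proof -
  have "(\<integral>\<^sup>+(z::complex). ennreal (exp (- c * (norm z)\<^sup>2)) \<partial>lborel)
      = (\<integral>\<^sup>+(z::complex). (\<Prod>b\<in>Basis. ennreal (exp (- c * (z \<bullet> b)\<^sup>2))) \<partial>lborel)"
    by (intro nn_integral_cong)
       (simp add: Basis_complex_def cmod_power2 algebra_simps exp_add[symmetric] ennreal_mult[symmetric])
  also have "\<dots> = (\<Prod>b\<in>(Basis::complex set). (\<integral>\<^sup>+t. ennreal (exp (- c * t\<^sup>2)) \<partial>lborel))"
    by (rule nn_integral_lborel_prod) auto
  finally show ?thesis
    using nn_integral_gaussian_finite[OF c] by (simp add: Basis_complex_def ennreal_mult_less_top)
qed

lemma Cauchy_coefficient_circle:
  fixes g :: "complex \<Rightarrow> complex"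
  assumes g: "g holomorphic_on UNIV" and r: "r > 0"
  defines "\<gamma> \<equiv> \<lambda>t. of_real r * exp (2 * of_real pi * \<i> * of_real t)"
  shows "((\<lambda>t. g (\<gamma> t) / (\<gamma> t) ^ k) has_integral ((deriv ^^ k) g 0 / fact k)) {0..1}"
proof -
  have "((\<lambda>u. g u / (u - 0) ^ Suc k) has_contour_integral (2 * pi * \<i> / fact k * (deriv ^^ k) g 0))
          (circlepath 0 r)"
    by (rule Cauchy_has_contour_integral_higher_derivative_circlepath)
       (use g r in \<open>auto intro: holomorphic_on_subset holomorphic_on_imp_continuous_on\<close>)
  then have "((\<lambda>t. 2 * pi * \<i> * (g (\<gamma> t) / (\<gamma> t) ^ k))
      has_integral (2 * pi * \<i> / fact k * (deriv ^^ k) g 0)) {0..1}"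
    unfolding has_contour_integral_def
    by (rule has_integral_eq[rotated])
       (use r in \<open>simp add: vector_derivative_circlepath01, simp add: circlepath \<gamma>_def\<close>)
  from has_integral_mult_left[OF this, of "1 / (2 * pi * \<i>)"]
  show ?thesis by simp
qed

lemma powr_ge_tangent:
  fixes m x p :: real
  assumes m: "m > 0" and x: "x \<ge> 0" and p: "p \<ge> 1"
  shows "m powr p + p * m powr (p - 1) * (x - m) \<le> x powr p"
proof (cases "x = 0")
  case True
  have "m powr p = m powr (p - 1) * m"
    using m by (simp add: powr_diff)
  then have "m powr p + p * m powr (p - 1) * (0 - m) = (1 - p) * m powr p"
    by (simp add: algebra_simps)
  also have "\<dots> \<le> 0"
    using p by (simp add: mult_nonpos_nonneg)
  finally show ?thesis using True by simp
next
  case False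
  have "x powr p - m powr p \<ge> (p * m powr (p - 1)) * (x - m)"
  proof (rule convex_on_imp_above_tangent[OF powr_convex[OF p]])
    show "m \<in> interior {0<..}" using m by (simp add: interior_open)
    show "((\<lambda>x. x powr p) has_field_derivative p * m powr (p - 1)) (at m within {0<..})"
      using m by (auto intro!: derivative_eq_intros)
  qed (use x False in auto)
  then show ?thesis by simp
qed

lemma powr_integral_le_integral_powr:
  fixes F :: "real \<Rightarrow> real" and p :: real
  assumes p: "p \<ge> 1" and F: "F integrable_on {0..1}" "\<And>t. t \<in> {0..1} \<Longrightarrow> F t \<ge> 0"
    and Fp: "(\<lambda>t. F t powr p) integrable_on {0..1}"
  shows "(integral {0..1} F) powr p \<le> integral {0..1} (\<lambda>t. F t powr p)"
proof -
  define m where "m = integral {0..1} F"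
  have "m \<ge> 0"
    unfolding m_def using F by (intro integral_nonneg) auto
  show ?thesis
  proof (cases "m = 0")
    case True
    have "0 \<le> integral {0..1} (\<lambda>t. F t powr p)"
      using Fp by (intro integral_nonneg) auto
    then show ?thesis using True m_def by simp
  next
    case False
    with \<open>m \<ge> 0\<close> have "m > 0" by simp
    have hF: "(F has_integral m) {0..1}"
      unfolding m_def using F(1) by (rule integrable_integral)
    have hc: "((\<lambda>t. c) has_integral c) {0..1::real}" for c :: real
      using has_integral_const_real[of c 0 1] by simp
    have tangent: "((\<lambda>t. m powr p + p * m powr (p - 1) * (F t - m)) has_integral
        (m powr p + p * m powr (p - 1) * (m - m))) {0..1}"
      by (intro has_integral_add has_integral_mult_right has_integral_diff hF hc)
    then have "m powr p = integral {0..1} (\<lambda>t. m powr p + p * m powr (p - 1) * (F t - m))"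
      unfolding diff_self mult_zero_right add_0_right by (rule integral_unique[symmetric])
    also have "\<dots> \<le> integral {0..1} (\<lambda>t. F t powr p)"
    proof (rule integral_le)
      show "(\<lambda>t. m powr p + p * m powr (p - 1) * (F t - m)) integrable_on {0..1}"
        using tangent by (rule has_integral_integrable)
      show "m powr p + p * m powr (p - 1) * (F t - m) \<le> F t powr p" if "t \<in> {0..1}" for t
        using F(2)[OF that] \<open>m > 0\<close> p by (intro powr_ge_tangent)
    qed (use Fp in simp)
    finally show ?thesis unfolding m_def .
  qed
qed

lemma norm_powr_le_circle_mean:
  fixes g :: "complex \<Rightarrow> complex" and u :: complex and p :: real
  assumes g: "g holomorphic_on UNIV" and p: "p \<ge> 1"
  shows "norm (g 0) powr p \<le> integral {0..1} (\<lambda>t. norm (g (u * exp (2 * of_real pi * \<i> * of_real t))) powr p)"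
proof -
  define F where "F = (\<lambda>t. norm (g (u * exp (2 * of_real pi * \<i> * of_real t))))"
  have "(\<lambda>v. g (u * v)) holomorphic_on UNIV"
    by (rule holomorphic_on_compose_gen[OF _ g, unfolded o_def]) (auto intro: holomorphic_intros)
  from Cauchy_coefficient_circle[OF this, of 1 0]
  have mean: "((\<lambda>t. g (u * exp (2 * of_real pi * \<i> * of_real t))) has_integral g 0) {0..1}"
    by simp
  have cg: "continuous_on UNIV g"
    using g holomorphic_on_imp_continuous_on by blast
  have cF: "continuous_on {0..1} F"
    unfolding F_def by (intro continuous_intros continuous_on_compose2[OF cg]) auto
  have cFp: "continuous_on {0..1} (\<lambda>t. F t powr p)"
    by (rule continuous_on_powr'[OF cF]) (use p in \<open>auto simp: F_def\<close>)
  have "norm (g 0) \<le> integral {0..1} F"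
    using integral_norm_bound_integral[OF has_integral_integrable[OF mean]
        integrable_continuous_interval[OF cF]]
    unfolding integral_unique[OF mean] F_def by simp
  then have "norm (g 0) powr p \<le> (integral {0..1} F) powr p"
    using p by (intro powr_mono2) auto
  also have "\<dots> \<le> integral {0..1} (\<lambda>t. F t powr p)"
    by (rule powr_integral_le_integral_powr[OF p integrable_continuous_interval[OF cF] _
          integrable_continuous_interval[OF cFp]]) (simp add: F_def)
  finally show ?thesis unfolding F_def .
qed

lemma nn_integral_unit_interval_continuous:
  fixes F :: "real \<Rightarrow> real"
  assumes cF: "continuous_on UNIV F" and F0: "\<And>t. F t \<ge> 0"
  shows "(\<integral>\<^sup>+t. indicator {0..1} t * ennreal (F t) \<partial>lborel) = ennreal (integral {0..1} F)"
proof -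
  have "F \<in> borel_measurable borel"
    using cF by (rule borel_measurable_continuous_onI)
  moreover have "((\<lambda>t. indicator {0..1} t * F t) has_integral integral {0..1} F) UNIV"
  proof -
    have eq: "(\<lambda>t. indicator {0..1} t * F t) = (\<lambda>x. if x \<in> {0..1} then F x else 0)"
      by (auto simp: indicator_def)
    have "(F has_integral integral {0..1} F) {0..1}"
      using integrable_continuous_interval[OF continuous_on_subset[OF cF]] by (simp add: has_integral_integral)
    then show ?thesis
      unfolding eq has_integral_restrict_UNIV .
  qed
  ultimately have "(\<integral>\<^sup>+t. ennreal (indicator {0..1} t * F t) \<partial>lborel) = ennreal (integral {0..1} F)"
    using F0 by (intro nn_integral_has_integral_lborel) auto
  moreover have "(\<lambda>t. indicator {0..1} t * ennreal (F t)) = (\<lambda>t. ennreal (indicator {0..1} t * F t))"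
    by (auto simp: indicator_def)
  ultimately show ?thesis by simp
qed

lemma nn_integral_rotation_average:
  fixes \<Phi> :: "complex \<Rightarrow> ennreal"
  assumes \<Phi>m: "\<Phi> \<in> borel_measurable borel"
  defines "e \<equiv> \<lambda>t::real. exp (2 * of_real pi * \<i> * of_real t) :: complex"
  shows "(\<integral>\<^sup>+u. \<Phi> u \<partial>lborel) = (\<integral>\<^sup>+u. (\<integral>\<^sup>+t. indicator {0..1} t * \<Phi> (e t * u) \<partial>lborel) \<partial>lborel)"
proof -
  have ne: "norm (e t) = 1" for t
    unfolding e_def by (simp add: norm_exp_eq_Re)
  have ce: "continuous_on UNIV e"
    unfolding e_def by (intro continuous_intros)
  have m1: "(\<lambda>u. \<Phi> (e t * u)) \<in> borel_measurable lborel" for t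
    by (simp add: borel_measurable_compose_continuous[OF \<Phi>m] continuous_intros)
  have "continuous_on UNIV (\<lambda>q::real \<times> complex. e (fst q) * snd q)"
    by (intro continuous_intros continuous_on_compose2[OF ce]) auto
  then have "(\<lambda>q::real \<times> complex. \<Phi> (e (fst q) * snd q)) \<in> borel_measurable borel"
    by (rule borel_measurable_compose_continuous[OF \<Phi>m])
  moreover have "sets (lborel \<Otimes>\<^sub>M lborel) = sets (borel :: (real \<times> complex) measure)"
    by (metis borel_prod sets_lborel sets_pair_measure_cong)
  ultimately have [measurable]: "(\<lambda>q::real \<times> complex. \<Phi> (e (fst q) * snd q))
      \<in> borel_measurable (lborel \<Otimes>\<^sub>M lborel)"
    using measurable_cong_sets by blast
  have m2: "(\<lambda>q::real \<times> complex. indicator {0..1} (fst q) * \<Phi> (e (fst q) * snd q))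
      \<in> borel_measurable (lborel \<Otimes>\<^sub>M lborel)"
    by measurable
  have "(\<integral>\<^sup>+u. \<Phi> u \<partial>lborel) = (\<integral>\<^sup>+(t::real). (\<integral>\<^sup>+u. \<Phi> u \<partial>lborel) * indicator {0..1} t \<partial>lborel)"
    by (subst nn_integral_cmult_indicator) auto
  also have "\<dots> = (\<integral>\<^sup>+t. indicator {0..1} t * (\<integral>\<^sup>+u. \<Phi> (e t * u) \<partial>lborel) \<partial>lborel)"
    by (intro nn_integral_cong) (subst nn_integral_mult_unit[OF \<Phi>m ne], rule mult.commute)
  also have "\<dots> = (\<integral>\<^sup>+t. (\<integral>\<^sup>+u. indicator {0..1} t * \<Phi> (e t * u) \<partial>lborel) \<partial>lborel)"
    by (intro nn_integral_cong nn_integral_cmult[symmetric] m1)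
  also have "\<dots> = (\<integral>\<^sup>+u. (\<integral>\<^sup>+t. indicator {0..1} t * \<Phi> (e t * u) \<partial>lborel) \<partial>lborel)"
    using lborel_pair.Fubini'[of "\<lambda>t u. indicator {0..1} t * \<Phi> (e t * u)"] m2
    by (simp add: case_prod_beta')
  finally show ?thesis .
qed

lemma norm_powr_le_disc_mean:
  fixes g :: "complex \<Rightarrow> complex" and p :: real
  assumes g: "g holomorphic_on UNIV" and p: "p \<ge> 1"
  shows "ennreal (norm (g 0) powr p * pi)
    \<le> (\<integral>\<^sup>+u. indicator (ball 0 1) u * ennreal (norm (g u) powr p) \<partial>lborel)"
proof -
  define e where "e = (\<lambda>t::real. exp (2 * of_real pi * \<i> * of_real t) :: complex)"
  define \<Phi> where "\<Phi> = (\<lambda>u. indicator (ball (0::complex) 1) u * ennreal (norm (g u) powr p))"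
  have cg: "continuous_on UNIV g"
    using g holomorphic_on_imp_continuous_on by blast
  have [measurable]: "g \<in> borel_measurable borel"
    using cg by (rule borel_measurable_continuous_onI)
  have [measurable]: "ball (0::complex) 1 \<in> sets borel"
    by simp
  have \<Phi>m: "\<Phi> \<in> borel_measurable borel"
    unfolding \<Phi>_def by measurable
  have "ennreal (norm (g 0) powr p * pi) = (\<integral>\<^sup>+u. ennreal (norm (g 0) powr p) * indicator (ball (0::complex) 1) u \<partial>lborel)"
    by (simp add: nn_integral_cmult_indicator emeasure_ball unit_ball_vol_2 ennreal_mult)
  also have "\<dots> \<le> (\<integral>\<^sup>+u. (\<integral>\<^sup>+t. indicator {0..1} t * \<Phi> (e t * u) \<partial>lborel) \<partial>lborel)"
  proof (rule nn_integral_mono)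
    fix u :: complex
    show "ennreal (norm (g 0) powr p) * indicator (ball 0 1) u \<le> (\<integral>\<^sup>+t. indicator {0..1} t * \<Phi> (e t * u) \<partial>lborel)"
    proof (cases "u \<in> ball 0 1")
      case True
      then have "e t * u \<in> ball 0 1" for t
        by (simp add: e_def norm_mult norm_exp_eq_Re)
      then have "(\<integral>\<^sup>+t. indicator {0..1} t * \<Phi> (e t * u) \<partial>lborel)
          = (\<integral>\<^sup>+t. indicator {0..1} t * ennreal (norm (g (u * e t)) powr p) \<partial>lborel)"
        unfolding \<Phi>_def by (simp add: mult.commute)
      also have "\<dots> = ennreal (integral {0..1} (\<lambda>t. norm (g (u * e t)) powr p))"
      proof (rule nn_integral_unit_interval_continuous)
        have "continuous_on UNIV (\<lambda>t. norm (g (u * e t)))"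
          unfolding e_def by (intro continuous_intros continuous_on_compose2[OF cg]) auto
        then show "continuous_on UNIV (\<lambda>t. norm (g (u * e t)) powr p)"
          by (rule continuous_on_powr') (use p in auto)
      qed simp
      also have "\<dots> \<ge> ennreal (norm (g 0) powr p)"
        using norm_powr_le_circle_mean[OF g p, of u] unfolding e_def by (rule ennreal_leI)
      finally show ?thesis using True by simp
    qed simp
  qed
  also have "\<dots> = (\<integral>\<^sup>+u. \<Phi> u \<partial>lborel)"
    unfolding e_def by (rule nn_integral_rotation_average[OF \<Phi>m, symmetric])
  finally show ?thesis unfolding \<Phi>_def .
qed

lemma borel_measurable_fock_integrand:
  fixes f :: "complex \<Rightarrow> complex"
  assumes [measurable]: "f \<in> borel_measurable borel"
  shows "(\<lambda>z. ennreal (norm (f z) powr p * exp (- p * (norm z)\<^sup>2 / 2))) \<in> borel_measurable borel"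
  by measurable

lemma norm_add_power2_complex:
  fixes x y :: complex
  shows "(norm (x + y))\<^sup>2 = (norm x)\<^sup>2 + 2 * Re (cnj x * y) + (norm y)\<^sup>2"
  unfolding cmod_power2 by (simp add: power2_eq_square algebra_simps)

text \<open>For |a| = 1 the weighted composition with weight c exp(-conj(b) a z) and symbol a z + b is
  c times a Weyl translation composed with a rotation; the weight exactly compensates the change
  of the Gaussian factor under u = a z + b.\<close>
lemma fock_integral_weyl:
  fixes a b c :: complex and f :: "complex \<Rightarrow> complex"
  assumes a: "norm a = 1" and f: "f \<in> borel_measurable borel"
  shows "fock_integral p (wcomp (\<lambda>z. c * exp (- cnj b * a * z)) (\<lambda>z. a * z + b) f)
       = ennreal (norm c powr p * exp (p * (norm b)\<^sup>2 / 2)) * fock_integral p f"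
proof -
  define G where "G = (\<lambda>v. ennreal (norm (f v) powr p * exp (- p * (norm v)\<^sup>2 / 2)))"
  have Gm: "G \<in> borel_measurable borel"
    unfolding G_def using f by (rule borel_measurable_fock_integrand)
  define K where "K = norm c powr p * exp (p * (norm b)\<^sup>2 / 2)"
  have pointwise: "ennreal (norm (wcomp (\<lambda>z. c * exp (- cnj b * a * z)) (\<lambda>z. a * z + b) f z) powr p
      * exp (- p * (norm z)\<^sup>2 / 2)) = ennreal K * G (a * z + b)" for z
  proof -
    define r where "r = Re (cnj b * a * z)"
    have sq: "(norm (a * z + b))\<^sup>2 = (norm z)\<^sup>2 + 2 * r + (norm b)\<^sup>2"
      using norm_add_power2_complex[of "a * z" b] a unfolding r_def by (simp add: norm_mult algebra_simps)
    have "norm (wcomp (\<lambda>z. c * exp (- cnj b * a * z)) (\<lambda>z. a * z + b) f z)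
        = norm c * exp (- r) * norm (f (a * z + b))"
      unfolding r_def wcomp_def by (simp add: norm_mult norm_exp_eq_Re)
    then have "norm (wcomp (\<lambda>z. c * exp (- cnj b * a * z)) (\<lambda>z. a * z + b) f z) powr p * exp (- p * (norm z)\<^sup>2 / 2)
       = norm c powr p * norm (f (a * z + b)) powr p * (exp (p * (- r)) * exp (- p * (norm z)\<^sup>2 / 2))"
      by (simp add: powr_mult exp_powr_real mult_ac)
    also have "exp (p * (- r)) * exp (- p * (norm z)\<^sup>2 / 2)
        = exp (p * (norm b)\<^sup>2 / 2) * exp (- p * (norm (a * z + b))\<^sup>2 / 2)"
      unfolding sq exp_add[symmetric] by (simp add: field_simps)
    finally show ?thesis
      unfolding G_def K_def by (simp add: ennreal_mult[symmetric] mult_ac)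
  qed
  have "(\<lambda>z. G (a * z + b)) \<in> borel_measurable lborel"
    by (simp add: borel_measurable_compose_continuous[OF Gm] continuous_intros)
  then have "fock_integral p (wcomp (\<lambda>z. c * exp (- cnj b * a * z)) (\<lambda>z. a * z + b) f)
      = ennreal K * (\<integral>\<^sup>+z. G (a * z + b) \<partial>lborel)"
    unfolding fock_integral_def pointwise by (rule nn_integral_cmult)
  also have "(\<integral>\<^sup>+z. G (a * z + b) \<partial>lborel) = fock_integral p f"
    using nn_integral_affine_isometry[OF Gm a, of b] unfolding fock_integral_def G_def by simp
  finally show ?thesis
    unfolding K_def .
qed

lemma fock_integral_ge_origin:
  fixes g :: "complex \<Rightarrow> complex" and p :: real
  assumes g: "g holomorphic_on UNIV" and p: "p \<ge> 1"
  shows "ennreal (exp (- p / 2) * norm (g 0) powr p * pi) \<le> fock_integral p g"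
proof -
  have "continuous_on UNIV g"
    using g holomorphic_on_imp_continuous_on by blast
  then have [measurable]: "g \<in> borel_measurable borel"
    by (rule borel_measurable_continuous_onI)
  have [measurable]: "ball (0::complex) 1 \<in> sets borel"
    by simp
  have "ennreal (exp (- p / 2) * norm (g 0) powr p * pi)
      \<le> ennreal (exp (- p / 2)) * (\<integral>\<^sup>+u. indicator (ball 0 1) u * ennreal (norm (g u) powr p) \<partial>lborel)"
    using norm_powr_le_disc_mean[OF g p] by (simp add: ennreal_mult mult.assoc mult_left_mono)
  also have "\<dots> = (\<integral>\<^sup>+u. ennreal (exp (- p / 2)) * (indicator (ball 0 1) u * ennreal (norm (g u) powr p)) \<partial>lborel)"
    by (rule nn_integral_cmult[symmetric]) measurable
  also have "\<dots> \<le> fock_integral p g"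
    unfolding fock_integral_def
  proof (rule nn_integral_mono)
    fix u :: complex
    show "ennreal (exp (- p / 2)) * (indicator (ball 0 1) u * ennreal (norm (g u) powr p))
        \<le> ennreal (norm (g u) powr p * exp (- p * (norm u)\<^sup>2 / 2))"
    proof (cases "u \<in> ball 0 1")
      case True
      then have "(norm u)\<^sup>2 \<le> 1"
        by (simp add: abs_square_le_1)
      then have "exp (- p / 2) \<le> exp (- p * (norm u)\<^sup>2 / 2)"
        using p by (simp add: mult_left_mono)
      then show ?thesis
        using True by (simp add: ennreal_mult[symmetric] mult.commute mult_left_mono)
    qed simp
  qed
  finally show ?thesis .
qed

lemma fock_integral_ge:
  fixes f :: "complex \<Rightarrow> complex" and p :: real
  assumes f: "f holomorphic_on UNIV" and p: "p \<ge> 1"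
  shows "ennreal (exp (- p / 2) * (norm (f z) * exp (- (norm z)\<^sup>2 / 2)) powr p * pi) \<le> fock_integral p f"
proof -
  define c where "c = complex_of_real (exp (- (norm z)\<^sup>2 / 2))"
  define g where "g = wcomp (\<lambda>u. c * exp (- cnj z * 1 * u)) (\<lambda>u. 1 * u + z) f"
  have "g holomorphic_on UNIV"
    unfolding g_def wcomp_def
    by (intro holomorphic_intros holomorphic_on_compose_gen[OF _ f, unfolded o_def]) auto
  moreover have "norm (g 0) = norm (f z) * exp (- (norm z)\<^sup>2 / 2)"
    unfolding g_def wcomp_def c_def by (simp add: norm_mult)
  moreover have "fock_integral p g = fock_integral p f"
  proof -
    have "f \<in> borel_measurable borel"
      using f holomorphic_on_imp_continuous_on borel_measurable_continuous_onI by blast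
    moreover have "norm c powr p * exp (p * (norm z)\<^sup>2 / 2) = 1"
      unfolding c_def by (simp add: exp_powr_real exp_add[symmetric])
    ultimately show ?thesis
      using fock_integral_weyl[of 1 f p c z] unfolding g_def by simp
  qed
  ultimately show ?thesis
    using fock_integral_ge_origin[of g p] p by simp
qed

lemma fock_norm_eq_scaled:
  assumes "fock_integral p g = ennreal K * fock_integral p f" "K \<ge> 0"
  shows "fock_norm p g = K powr (1 / p) * fock_norm p f"
proof -
  define E where "E = enn2real (fock_integral p f)"
  have "fock_norm p g = (K * (p / (2 * pi) * E)) powr (1 / p)"
    unfolding fock_norm_def assms(1) E_def using assms(2) by (simp add: enn2real_mult mult_ac)
  also have "\<dots> = K powr (1 / p) * (p / (2 * pi) * E) powr (1 / p)"
    by (rule powr_mult)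
  finally show ?thesis
    unfolding fock_norm_def E_def .
qed

definition fock_point_const :: "real \<Rightarrow> real" where
  "fock_point_const p = (2 * exp (p / 2) / p) powr (1 / p)"

lemma fock_point_estimate:
  fixes f :: "complex \<Rightarrow> complex" and p :: real
  assumes p: "p \<ge> 1" and f: "f \<in> fock_space p"
  shows "norm (f z) * exp (- (norm z)\<^sup>2 / 2) \<le> fock_point_const p * fock_norm p f"
proof -
  define X where "X = norm (f z) * exp (- (norm z)\<^sup>2 / 2)"
  define E where "E = enn2real (fock_integral p f)"
  have "X \<ge> 0" and "E \<ge> 0"
    unfolding X_def E_def by simp_all
  have "fock_integral p f < \<infinity>"
    using f unfolding fock_space_def by simp
  then have "fock_integral p f = ennreal E"
    unfolding E_def by (simp add: ennreal_enn2real_if)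
  then have "exp (- p / 2) * X powr p * pi \<le> E"
    using fock_integral_ge[of f p z] f p \<open>E \<ge> 0\<close> unfolding X_def fock_space_def
    by simp
  then have "X powr p \<le> (2 * exp (p / 2) / p) * (p / (2 * pi) * E)"
    using p by (simp add: field_simps exp_minus)
  then have "(X powr p) powr (1 / p) \<le> ((2 * exp (p / 2) / p) * (p / (2 * pi) * E)) powr (1 / p)"
    using p by (intro powr_mono2) auto
  then have "X \<le> ((2 * exp (p / 2) / p) * (p / (2 * pi) * E)) powr (1 / p)"
    using p \<open>X \<ge> 0\<close> by (simp add: powr_powr)
  also have "\<dots> = fock_point_const p * fock_norm p f"
    unfolding fock_point_const_def fock_norm_def E_def[symmetric]
    by (rule powr_mult)
  finally show ?thesis
    unfolding X_def .
qed

lemma fock_bounded_op_weyl: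
  fixes a b c :: complex
  assumes a: "norm a = 1"
  shows "fock_bounded_op p (wcomp (\<lambda>z. c * exp (- cnj b * a * z)) (\<lambda>z. a * z + b))"
proof -
  define T where "T = wcomp (\<lambda>z. c * exp (- cnj b * a * z)) (\<lambda>z. a * z + b)"
  define K where "K = norm c powr p * exp (p * (norm b)\<^sup>2 / 2)"
  have integral: "fock_integral p (T f) = ennreal K * fock_integral p f" if "f \<in> fock_space p" for f
    using that holomorphic_on_imp_continuous_on borel_measurable_continuous_onI
    unfolding T_def K_def fock_space_def by (blast intro: fock_integral_weyl[OF a])
  have "T f \<in> fock_space p" if f: "f \<in> fock_space p" for f
  proof -
    have "T f holomorphic_on UNIV"
      using f unfolding T_def wcomp_def fock_space_def
      by (auto intro!: holomorphic_intros holomorphic_on_compose_gen[of _ UNIV f UNIV, unfolded o_def])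
    moreover have "fock_integral p (T f) < \<infinity>"
      using integral[OF f] f unfolding fock_space_def by (simp add: ennreal_mult_less_top)
    ultimately show ?thesis
      unfolding fock_space_def by simp
  qed
  moreover have "fock_norm p (T f) \<le> K powr (1 / p) * fock_norm p f" if "f \<in> fock_space p" for f
    using fock_norm_eq_scaled[OF integral[OF that]] unfolding K_def by simp
  moreover have "T (\<lambda>z. f z + g z) = (\<lambda>z. T f z + T g z)" "T (\<lambda>z. d * f z) = (\<lambda>z. d * T f z)" for f g d
    unfolding T_def wcomp_def by (simp_all add: algebra_simps)
  ultimately show ?thesis
    unfolding fock_bounded_op_def T_def[symmetric] by blast
qed

lemma wcomp_weyl_left_inverse:
  fixes a b c :: complex
  assumes a: "norm a = 1" and c: "c \<noteq> 0"
    and a': "a' = cnj a" and b': "b' = - cnj a * b" and c': "c' = exp (- cnj b * b) / c"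
  shows "wcomp (\<lambda>z. c' * exp (- cnj b' * a' * z)) (\<lambda>z. a' * z + b')
           (wcomp (\<lambda>z. c * exp (- cnj b * a * z)) (\<lambda>z. a * z + b) f) = f"
proof (rule ext)
  fix u
  have aa: "a * cnj a = 1"
    using a complex_norm_square[of a] by simp
  have arg: "a * (a' * u + b') + b = u"
    unfolding a' b' using aa by algebra
  have "c' * exp (- cnj b' * a' * u) * (c * exp (- cnj b * a * (a' * u + b')))
      = exp (- cnj b * b + (- cnj b' * a' * u) + (- cnj b * a * (a' * u + b')))"
    unfolding exp_add c' using c by (simp add: field_simps)
  also have "- cnj b * b + (- cnj b' * a' * u) + (- cnj b * a * (a' * u + b')) = 0"
    unfolding a' b' using aa by (simp; algebra)
  finally show "wcomp (\<lambda>z. c' * exp (- cnj b' * a' * z)) (\<lambda>z. a' * z + b')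
      (wcomp (\<lambda>z. c * exp (- cnj b * a * z)) (\<lambda>z. a * z + b) f) u = f u"
    unfolding wcomp_def arg by (simp add: mult.assoc[symmetric])
qed

lemma fock_invertible_op_weyl:
  fixes a b c :: complex
  assumes a: "norm a = 1" and c: "c \<noteq> 0"
  shows "fock_invertible_op p (wcomp (\<lambda>z. c * exp (- cnj b * a * z)) (\<lambda>z. a * z + b))"
proof -
  define a' b' c' where "a' = cnj a" and "b' = - cnj a * b" and "c' = exp (- cnj b * b) / c"
  have a': "norm a' = 1" and c': "c' \<noteq> 0"
    using a c unfolding a'_def c'_def by simp_all
  have aa: "a * cnj a = 1"
    using a complex_norm_square[of a] by simp
  have "cnj b' * b' = cnj b * b"
    unfolding b'_def complex_cnj_mult complex_cnj_minus complex_cnj_cnj using aa by algebra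
  then have c_eq: "c = exp (- cnj b' * b') / c'"
    using c unfolding c'_def by simp
  have a_eq: "a = cnj a'" and b_eq: "b = - cnj a' * b'"
    using aa unfolding a'_def b'_def by (simp_all add: mult.assoc[symmetric])
  have "wcomp (\<lambda>z. c * exp (- cnj b * a * z)) (\<lambda>z. a * z + b)
      (wcomp (\<lambda>z. c' * exp (- cnj b' * a' * z)) (\<lambda>z. a' * z + b') f) = f" for f
    by (rule wcomp_weyl_left_inverse[OF a' c' a_eq b_eq c_eq])
  moreover have "wcomp (\<lambda>z. c' * exp (- cnj b' * a' * z)) (\<lambda>z. a' * z + b')
      (wcomp (\<lambda>z. c * exp (- cnj b * a * z)) (\<lambda>z. a * z + b) f) = f" for f
    by (rule wcomp_weyl_left_inverse[OF a c a'_def b'_def c'_def])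
  ultimately show ?thesis
    unfolding fock_invertible_op_def using fock_bounded_op_weyl[OF a] fock_bounded_op_weyl[OF a'] by blast
qed

definition fock_kernel :: "complex \<Rightarrow> complex \<Rightarrow> complex" where
  "fock_kernel \<zeta> = (\<lambda>u. exp (cnj \<zeta> * u))"

lemma fock_integral_kernel:
  "fock_integral p (fock_kernel \<zeta>) = ennreal (exp (p * (norm \<zeta>)\<^sup>2 / 2)) * fock_integral p (\<lambda>_. 1)"
proof -
  have "fock_integral p (wcomp (\<lambda>z. 1 * exp (- cnj (- \<zeta>) * 1 * z)) (\<lambda>z. 1 * z + (- \<zeta>)) (\<lambda>_. 1))
      = ennreal (norm (1::complex) powr p * exp (p * (norm (- \<zeta>))\<^sup>2 / 2)) * fock_integral p (\<lambda>_. 1)"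
    by (rule fock_integral_weyl) auto
  moreover have "wcomp (\<lambda>z. 1 * exp (- cnj (- \<zeta>) * 1 * z)) (\<lambda>z. 1 * z + (- \<zeta>)) (\<lambda>_. 1) = fock_kernel \<zeta>"
    unfolding fock_kernel_def wcomp_def by simp
  ultimately show ?thesis
    by simp
qed

lemma fock_integral_const_finite:
  assumes "p > 0"
  shows "fock_integral p (\<lambda>_. 1) < \<infinity>"
proof -
  have "fock_integral p (\<lambda>_. 1) = (\<integral>\<^sup>+(z::complex). ennreal (exp (- (p / 2) * (norm z)\<^sup>2)) \<partial>lborel)"
    unfolding fock_integral_def by (intro nn_integral_cong) (simp add: field_simps)
  then show ?thesis
    using nn_integral_gaussian_complex_finite[of "p / 2"] assms by simp
qed

lemma fock_kernel_in_fock_space: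
  assumes "p > 0"
  shows "fock_kernel \<zeta> \<in> fock_space p"
  unfolding fock_space_def using fock_integral_kernel[of p \<zeta>] fock_integral_const_finite[OF assms]
  by (auto intro!: holomorphic_intros simp: fock_kernel_def ennreal_mult_less_top)

lemma fock_norm_kernel:
  assumes "p > 0"
  shows "fock_norm p (fock_kernel \<zeta>) = exp ((norm \<zeta>)\<^sup>2 / 2) * fock_norm p (\<lambda>_. 1)"
  using fock_norm_eq_scaled[OF fock_integral_kernel] assms by (simp add: exp_powr_real)

lemma fock_pointwise_bound_of_kernel_bound:
  fixes g :: "complex \<Rightarrow> complex"
  assumes p: "p \<ge> 1" and g: "g \<in> fock_space p"
    and bound: "fock_norm p g \<le> C * fock_norm p (fock_kernel \<zeta>)"
  shows "norm (g z) \<le> fock_point_const p * C * fock_norm p (\<lambda>_. 1) * exp (((norm z)\<^sup>2 + (norm \<zeta>)\<^sup>2) / 2)"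
proof -
  have "fock_point_const p \<ge> 0"
    unfolding fock_point_const_def by simp
  have "norm (g z) / exp ((norm z)\<^sup>2 / 2) \<le> fock_point_const p * fock_norm p g"
    using fock_point_estimate[OF p g, of z] by (simp add: exp_minus field_simps)
  also have "\<dots> \<le> fock_point_const p * (C * (exp ((norm \<zeta>)\<^sup>2 / 2) * fock_norm p (\<lambda>_. 1)))"
    using bound fock_norm_kernel[of p \<zeta>] p \<open>fock_point_const p \<ge> 0\<close> by (simp add: mult_left_mono)
  finally have "norm (g z) \<le> fock_point_const p * (C * (exp ((norm \<zeta>)\<^sup>2 / 2) * fock_norm p (\<lambda>_. 1)))
      * exp ((norm z)\<^sup>2 / 2)"
    by (simp add: pos_divide_le_eq)
  then show ?thesis
    by (simp add: add_divide_distrib exp_add mult_ac)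
qed

definition wcomp_growth :: "(complex \<Rightarrow> complex) \<Rightarrow> (complex \<Rightarrow> complex) \<Rightarrow> complex \<Rightarrow> real" where
  "wcomp_growth w \<phi> z = norm (w z) * exp (((norm (\<phi> z))\<^sup>2 - (norm z)\<^sup>2) / 2)"

lemma norm_exp_cnj_mult_self: "norm (exp (cnj z * z)) = exp ((norm z)\<^sup>2)"
proof -
  have "cnj z * z = of_real ((norm z)\<^sup>2)"
    using complex_norm_square[of z] by (simp add: mult.commute)
  then show ?thesis
    by (simp add: norm_exp_eq_Re)
qed

lemma wcomp_growth_bounded_above:
  assumes p: "p \<ge> 1" and T: "fock_bounded_op p (wcomp w \<phi>)"
  shows "\<exists>U. \<forall>z. wcomp_growth w \<phi> z \<le> U"
proof -
  obtain C where C: "\<And>f. f \<in> fock_space p \<Longrightarrow> fock_norm p (wcomp w \<phi> f) \<le> C * fock_norm p f"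
    using T unfolding fock_bounded_op_def by blast
  define U where "U = fock_point_const p * C * fock_norm p (\<lambda>_. 1)"
  have "wcomp_growth w \<phi> z \<le> U" for z
  proof -
    have k: "fock_kernel (\<phi> z) \<in> fock_space p"
      using p by (intro fock_kernel_in_fock_space) simp
    then have "wcomp w \<phi> (fock_kernel (\<phi> z)) \<in> fock_space p"
      using T unfolding fock_bounded_op_def by blast
    from fock_pointwise_bound_of_kernel_bound[OF p this C[OF k], of z]
    have "norm (w z) * exp ((norm (\<phi> z))\<^sup>2) \<le> U * exp (((norm z)\<^sup>2 + (norm (\<phi> z))\<^sup>2) / 2)"
      unfolding U_def wcomp_def fock_kernel_def norm_mult norm_exp_cnj_mult_self by (simp add: mult_ac)
    also have "norm (w z) * exp ((norm (\<phi> z))\<^sup>2)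
        = wcomp_growth w \<phi> z * exp (((norm z)\<^sup>2 + (norm (\<phi> z))\<^sup>2) / 2)"
      unfolding wcomp_growth_def mult.assoc exp_add[symmetric] by (simp add: field_simps)
    finally show ?thesis
      by simp
  qed
  then show ?thesis by blast
qed

lemma wcomp_growth_bounded_below:
  assumes p: "p \<ge> 1" and S: "fock_bounded_op p S"
    and right_inverse: "\<And>f. f \<in> fock_space p \<Longrightarrow> wcomp w \<phi> (S f) = f"
  shows "\<exists>L>0. \<forall>z. L \<le> wcomp_growth w \<phi> z"
proof -
  obtain C where C: "\<And>f. f \<in> fock_space p \<Longrightarrow> fock_norm p (S f) \<le> C * fock_norm p f"
    using S unfolding fock_bounded_op_def by blast
  define V where "V = fock_point_const p * C * fock_norm p (\<lambda>_. 1)"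
  have bound: "1 \<le> V * wcomp_growth w \<phi> z" for z
  proof -
    have k: "fock_kernel z \<in> fock_space p"
      using p by (intro fock_kernel_in_fock_space) simp
    then have h: "S (fock_kernel z) \<in> fock_space p"
      using S unfolding fock_bounded_op_def by blast
    have "exp ((norm z)\<^sup>2) = norm (w z) * norm (S (fock_kernel z) (\<phi> z))"
      using fun_cong[OF right_inverse[OF k], of z]
      unfolding wcomp_def fock_kernel_def by (metis norm_exp_cnj_mult_self norm_mult)
    also have "\<dots> \<le> norm (w z) * (V * exp (((norm (\<phi> z))\<^sup>2 + (norm z)\<^sup>2) / 2))"
      using fock_pointwise_bound_of_kernel_bound[OF p h C[OF k], of "\<phi> z"]
      unfolding V_def by (simp add: mult_left_mono)
    also have "\<dots> = (V * wcomp_growth w \<phi> z) * exp ((norm z)\<^sup>2)"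
      unfolding wcomp_growth_def mult.assoc exp_add[symmetric] by (simp add: field_simps)
    finally show ?thesis
      by simp
  qed
  have "wcomp_growth w \<phi> 0 \<ge> 0"
    unfolding wcomp_growth_def by simp
  then have "V > 0"
    using bound[of 0] by (meson le_numeral_extra(2) mult_nonpos_nonneg not_le order_trans)
  with bound have "\<forall>z. 1 / V \<le> wcomp_growth w \<phi> z"
    by (simp add: divide_le_eq mult.commute)
  with \<open>V > 0\<close> show ?thesis
    by (intro exI[of _ "1 / V"]) simp
qed

lemma circle_integral_norm_power2_le:
  fixes \<phi> h :: "complex \<Rightarrow> complex" and A r :: real
  assumes \<phi>: "\<phi> holomorphic_on UNIV" and h: "h holomorphic_on UNIV" and r: "r > 0"
    and bound: "\<And>z. (norm (\<phi> z))\<^sup>2 + 2 * Re (h z) \<le> (norm z)\<^sup>2 + A"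
  defines "\<gamma> \<equiv> \<lambda>t. of_real r * exp (2 * of_real pi * \<i> * of_real t)"
  shows "integral {0..1} (\<lambda>t. (norm (\<phi> (\<gamma> t)))\<^sup>2) \<le> r\<^sup>2 + A - 2 * Re (h 0)"
proof (rule has_integral_le)
  have c\<phi>: "continuous_on UNIV \<phi>"
    using \<phi> holomorphic_on_imp_continuous_on by blast
  have "continuous_on {0..1} (\<lambda>t. (norm (\<phi> (\<gamma> t)))\<^sup>2)"
    unfolding \<gamma>_def by (intro continuous_intros continuous_on_compose2[OF c\<phi>]) auto
  then show "((\<lambda>t. (norm (\<phi> (\<gamma> t)))\<^sup>2) has_integral integral {0..1} (\<lambda>t. (norm (\<phi> (\<gamma> t)))\<^sup>2)) {0..1}"
    by (intro integrable_integral integrable_continuous_interval)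
  have "((\<lambda>t. Re (h (\<gamma> t))) has_integral Re (h 0)) {0..1}"
    using has_integral_Re[OF Cauchy_coefficient_circle[OF h r, of 0]] unfolding \<gamma>_def by simp
  then show "((\<lambda>t. r\<^sup>2 + A - 2 * Re (h (\<gamma> t))) has_integral (r\<^sup>2 + A - 2 * Re (h 0))) {0..1}"
    using has_integral_const_real[of "r\<^sup>2 + A" 0 1]
    by (intro has_integral_diff has_integral_mult_right) auto
  show "(norm (\<phi> (\<gamma> t)))\<^sup>2 \<le> r\<^sup>2 + A - 2 * Re (h (\<gamma> t))" for t
    using bound[of "\<gamma> t"] r unfolding \<gamma>_def by (simp add: norm_mult norm_exp_eq_Re)
qed

lemma Cauchy_estimate_circle_norm_power2:
  fixes \<phi> :: "complex \<Rightarrow> complex" and r :: real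
  assumes \<phi>: "\<phi> holomorphic_on UNIV" and r: "r > 0"
  defines "\<gamma> \<equiv> \<lambda>t. of_real r * exp (2 * of_real pi * \<i> * of_real t)"
  shows "norm ((deriv ^^ n) \<phi> 0 / fact n)
    \<le> (integral {0..1} (\<lambda>t. (norm (\<phi> (\<gamma> t)))\<^sup>2) / (2 * r) + r / 2) / r ^ n"
proof -
  define Q where "Q = integral {0..1} (\<lambda>t. (norm (\<phi> (\<gamma> t)))\<^sup>2)"
  have c\<phi>: "continuous_on UNIV \<phi>"
    using \<phi> holomorphic_on_imp_continuous_on by blast
  have "continuous_on {0..1} (\<lambda>t. (norm (\<phi> (\<gamma> t)))\<^sup>2)"
    unfolding \<gamma>_def by (intro continuous_intros continuous_on_compose2[OF c\<phi>]) auto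
  then have "((\<lambda>t. (norm (\<phi> (\<gamma> t)))\<^sup>2) has_integral Q) {0..1}"
    unfolding Q_def by (intro integrable_integral integrable_continuous_interval)
  moreover have "((\<lambda>t. c) has_integral c) {0..1::real}" for c :: real
    using has_integral_const_real[of c 0 1] by simp
  ultimately have majorant: "((\<lambda>t. ((norm (\<phi> (\<gamma> t)))\<^sup>2 / (2 * r) + r / 2) / r ^ n)
      has_integral ((Q / (2 * r) + r / 2) / r ^ n)) {0..1}"
    by (intro has_integral_divide has_integral_add)
  have coeff: "((\<lambda>t. \<phi> (\<gamma> t) / (\<gamma> t) ^ n) has_integral ((deriv ^^ n) \<phi> 0 / fact n)) {0..1}"
    unfolding \<gamma>_def by (rule Cauchy_coefficient_circle[OF \<phi> r])
  have "norm (\<phi> (\<gamma> t) / \<gamma> t ^ n) \<le> ((norm (\<phi> (\<gamma> t)))\<^sup>2 / (2 * r) + r / 2) / r ^ n" for t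
  proof -
    \<comment> \<open>AM-GM: \<open>x \<le> x\<^sup>2 / (2 r) + r / 2\<close>\<close>
    have "0 \<le> (norm (\<phi> (\<gamma> t)) - r)\<^sup>2"
      by simp
    then have "norm (\<phi> (\<gamma> t)) \<le> (norm (\<phi> (\<gamma> t)))\<^sup>2 / (2 * r) + r / 2"
      using r by (simp add: field_simps power2_eq_square)
    moreover have "norm (\<gamma> t) = r"
      unfolding \<gamma>_def using r by (simp add: norm_mult norm_exp_eq_Re)
    ultimately show ?thesis
      using r by (simp add: norm_divide norm_power divide_right_mono)
  qed
  then show ?thesis
    using integral_norm_bound_integral[OF has_integral_integrable[OF coeff]
        has_integral_integrable[OF majorant]]
    unfolding integral_unique[OF coeff] integral_unique[OF majorant] Q_def by blast
qed

lemma higher_deriv_eq_0_of_quadratic_bound: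
  fixes \<phi> h :: "complex \<Rightarrow> complex" and A :: real
  assumes \<phi>: "\<phi> holomorphic_on UNIV" and h: "h holomorphic_on UNIV"
    and bound: "\<And>z. (norm (\<phi> z))\<^sup>2 + 2 * Re (h z) \<le> (norm z)\<^sup>2 + A"
    and n: "n \<ge> 2"
  shows "(deriv ^^ n) \<phi> 0 = 0"
proof (rule ccontr)
  assume "(deriv ^^ n) \<phi> 0 \<noteq> 0"
  define d where "d = norm ((deriv ^^ n) \<phi> 0 / fact n)"
  define B where "B = A - 2 * Re (h 0)"
  have d: "d > 0"
    using \<open>(deriv ^^ n) \<phi> 0 \<noteq> 0\<close> unfolding d_def by simp
  have growth: "d * r ^ n \<le> r + B / (2 * r)" if r: "r > 0" for r :: real
  proof -
    have "d \<le> ((r\<^sup>2 + B) / (2 * r) + r / 2) / r ^ n"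
      using Cauchy_estimate_circle_norm_power2[OF \<phi> r, of n]
        circle_integral_norm_power2_le[OF \<phi> h r bound] r
      unfolding d_def B_def
      by (smt (verit, best) divide_right_mono zero_less_power)
    also have "\<dots> = (r + B / (2 * r)) / r ^ n"
      using r by (simp add: field_simps power2_eq_square)
    finally show ?thesis
      using r by (simp add: field_simps)
  qed
  define r where "r = (2 + 2 * \<bar>B\<bar>) / d + 1"
  have r1: "r \<ge> 1"
    unfolding r_def using d by simp
  have "d * r\<^sup>2 \<le> d * r ^ n"
    using r1 n d by (intro mult_left_mono power_increasing) auto
  also have "\<dots> \<le> r + B / (2 * r)"
    using growth r1 by simp
  also have "\<dots> \<le> r * (1 + \<bar>B\<bar>)"
  proof -
    have "B / (2 * r) \<le> \<bar>B\<bar> / (2 * r)"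
      using r1 by (intro divide_right_mono) auto
    also have "\<dots> \<le> \<bar>B\<bar> / 1"
      using r1 by (intro divide_left_mono) auto
    also have "\<dots> \<le> \<bar>B\<bar> * r"
      using r1 by (simp add: mult_le_cancel_left1)
    finally show ?thesis
      by (simp add: algebra_simps)
  qed
  finally have "d * r \<le> 1 + \<bar>B\<bar>"
    using r1 by (simp add: power2_eq_square mult.assoc)
  moreover have "d * r = 2 + 2 * \<bar>B\<bar> + d"
    unfolding r_def using d by (simp add: field_simps)
  ultimately show False
    using d by simp
qed

lemma affine_of_quadratic_bound:
  fixes \<phi> h :: "complex \<Rightarrow> complex" and A :: real
  assumes \<phi>: "\<phi> holomorphic_on UNIV" and h: "h holomorphic_on UNIV"
    and bound: "\<And>z. (norm (\<phi> z))\<^sup>2 + 2 * Re (h z) \<le> (norm z)\<^sup>2 + A"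
  shows "\<phi> z = deriv \<phi> 0 * z + \<phi> 0"
proof -
  have "(\<lambda>n. (deriv ^^ n) \<phi> 0 / fact n * (z - 0) ^ n) sums \<phi> z"
    by (rule holomorphic_power_series[where r="norm z + 1"]) (auto intro: holomorphic_on_subset[OF \<phi>])
  moreover have "(\<lambda>n. (deriv ^^ n) \<phi> 0 / fact n * (z - 0) ^ n) sums
      (\<Sum>n\<in>{0,1}. (deriv ^^ n) \<phi> 0 / fact n * (z - 0) ^ n)"
    by (rule sums_finite) (use higher_deriv_eq_0_of_quadratic_bound[OF \<phi> h bound] in auto)
  ultimately show ?thesis
    using sums_unique2 by (fastforce simp: add.commute)
qed

lemma tendsto_gaussian_at_infinity:
  fixes c K :: real
  assumes "c > 0"
  shows "((\<lambda>z::complex. K * exp (- c * (norm z)\<^sup>2)) \<longlongrightarrow> 0) at_infinity"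
proof -
  have "((\<lambda>x::real. K * exp (- c * x\<^sup>2)) \<longlongrightarrow> 0) at_top"
    using assms by real_asymp
  moreover have "filterlim (\<lambda>z::complex. norm z) at_top at_infinity"
    by (rule filterlim_at_infinity_imp_norm_at_top) (simp add: filterlim_ident)
  ultimately show ?thesis
    using filterlim_compose by (fastforce simp: o_def)
qed

lemma entire_const_of_gaussian_two_sided_bound:
  fixes G :: "complex \<Rightarrow> complex" and s L U :: real
  assumes G: "G holomorphic_on UNIV" and L: "L > 0"
    and lower: "\<And>z. L \<le> norm (G z) * exp (s * (norm z)\<^sup>2)"
    and upper: "\<And>z. norm (G z) * exp (s * (norm z)\<^sup>2) \<le> U"
  shows "s = 0" and "G constant_on UNIV"
proof -
  have G0: "G z \<noteq> 0" for z
    using lower[of z] L by auto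
  have upper': "norm (G z) \<le> U * exp (- s * (norm z)\<^sup>2)" for z
    using upper[of z] by (simp add: exp_minus field_simps)
  have lower': "norm (1 / G z) \<le> (1 / L) * exp (- (- s) * (norm z)\<^sup>2)" for z
    using lower[of z] L G0[of z] by (simp add: norm_divide field_simps)
  show "s = 0"
  proof (rule ccontr)
    assume "s \<noteq> 0"
    then consider "s > 0" | "s < 0" by linarith
    then show False
    proof cases
      case 1
      have "(G \<longlongrightarrow> 0) at_infinity"
        by (rule Lim_null_comparison[OF always_eventually tendsto_gaussian_at_infinity[OF 1]])
           (use upper' in auto)
      then show False
        using Liouville_weak_0[OF G] G0 by blast
    next
      case 2
      have "(\<lambda>z. 1 / G z) holomorphic_on UNIV"
        using G G0 by (intro holomorphic_intros) auto
      moreover have "((\<lambda>z. 1 / G z) \<longlongrightarrow> 0) at_infinity"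
        using lower' 2
        by (intro Lim_null_comparison[OF always_eventually tendsto_gaussian_at_infinity[of "- s" "1 / L"]])
           auto
      ultimately show False
        using Liouville_weak_0 G0 by fastforce
    qed
  qed
  then have "bounded (range G)"
    using upper' unfolding bounded_iff by auto
  then show "G constant_on UNIV"
    by (rule Liouville_theorem[OF G])
qed

lemma wcomp_growth_affine:
  fixes a b :: complex
  shows "wcomp_growth w (\<lambda>z. a * z + b) z
       = norm (w z * exp (a * cnj b * z)) * exp (((norm a)\<^sup>2 - 1) / 2 * (norm z)\<^sup>2) * exp ((norm b)\<^sup>2 / 2)"
proof -
  define r where "r = Re (a * cnj b * z)"
  have sq: "(norm (a * z + b))\<^sup>2 = (norm a)\<^sup>2 * (norm z)\<^sup>2 + 2 * r + (norm b)\<^sup>2"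
    using norm_add_power2_complex[of "a * z" b] unfolding r_def
    by (simp add: norm_mult power_mult_distrib algebra_simps)
  have n: "norm (w z * exp (a * cnj b * z)) = norm (w z) * exp r"
    unfolding r_def by (simp add: norm_mult norm_exp_eq_Re)
  have e: "exp (((norm a)\<^sup>2 * (norm z)\<^sup>2 + 2 * r + (norm b)\<^sup>2 - (norm z)\<^sup>2) / 2)
      = exp r * exp (((norm a)\<^sup>2 - 1) / 2 * (norm z)\<^sup>2) * exp ((norm b)\<^sup>2 / 2)"
    unfolding exp_add[symmetric] by (simp add: field_simps)
  show ?thesis
    unfolding wcomp_growth_def n sq e by (simp add: mult_ac)
qed

lemma affine_of_wcomp_growth_bounded_above:
  fixes w \<phi> :: "complex \<Rightarrow> complex" and U :: real
  assumes w: "w holomorphic_on UNIV" and \<phi>: "\<phi> holomorphic_on UNIV"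
    and w0: "\<And>z. w z \<noteq> 0" and upper: "\<And>z. wcomp_growth w \<phi> z \<le> U"
  shows "\<exists>a b. \<forall>z. \<phi> z = a * z + b"
proof -
  have "U > 0"
    using upper[of 0] w0[of 0] unfolding wcomp_growth_def
    by (smt (verit) exp_gt_zero mult_pos_pos zero_less_norm_iff)
  obtain g where g: "g holomorphic_on UNIV" and exp_g: "\<And>z. exp (g z) = w z"
    using holomorphic_logarithm_exists[of UNIV w 0] w w0 by auto
  have "(norm (\<phi> z))\<^sup>2 + 2 * Re (g z) \<le> (norm z)\<^sup>2 + 2 * ln U" for z
  proof -
    have "exp (Re (g z) + ((norm (\<phi> z))\<^sup>2 - (norm z)\<^sup>2) / 2) \<le> U"
      using upper[of z] unfolding wcomp_growth_def exp_g[symmetric] by (simp add: norm_exp_eq_Re exp_add)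
    then have "Re (g z) + ((norm (\<phi> z))\<^sup>2 - (norm z)\<^sup>2) / 2 \<le> ln U"
      using \<open>U > 0\<close> by (metis exp_le_cancel_iff exp_ln)
    then show ?thesis
      by (simp add: field_simps)
  qed
  then show ?thesis
    using affine_of_quadratic_bound[OF \<phi> g] by blast
qed

lemma weyl_data_of_wcomp_growth_bounds:
  fixes w \<phi> :: "complex \<Rightarrow> complex" and L U :: real
  assumes w: "w holomorphic_on UNIV" and \<phi>: "\<phi> holomorphic_on UNIV" and L: "L > 0"
    and lower: "\<And>z. L \<le> wcomp_growth w \<phi> z" and upper: "\<And>z. wcomp_growth w \<phi> z \<le> U"
  shows "\<exists>a b. norm a = 1 \<and> (\<forall>z. \<phi> z = a * z + b) \<and> w 0 \<noteq> 0 \<and>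
           (\<forall>z. w z = w 0 * exp (- cnj b * a * z))"
proof -
  have w0: "w z \<noteq> 0" for z
    using lower[of z] L unfolding wcomp_growth_def by auto
  obtain a b where \<phi>_eq: "\<And>z. \<phi> z = a * z + b"
    using affine_of_wcomp_growth_bounded_above[OF w \<phi> w0 upper] by blast
  then have \<phi>_fun: "\<phi> = (\<lambda>z. a * z + b)"
    by blast
  define G where "G = (\<lambda>z. w z * exp (a * cnj b * z))"
  have G: "G holomorphic_on UNIV"
    unfolding G_def by (intro holomorphic_intros w)
  have growth: "wcomp_growth w \<phi> z
      = norm (G z) * exp (((norm a)\<^sup>2 - 1) / 2 * (norm z)\<^sup>2) * exp ((norm b)\<^sup>2 / 2)" for z
    unfolding G_def \<phi>_fun by (rule wcomp_growth_affine)
  have "L * exp (- (norm b)\<^sup>2 / 2) \<le> norm (G z) * exp (((norm a)\<^sup>2 - 1) / 2 * (norm z)\<^sup>2)"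
    and "norm (G z) * exp (((norm a)\<^sup>2 - 1) / 2 * (norm z)\<^sup>2) \<le> U * exp (- (norm b)\<^sup>2 / 2)" for z
    using lower[of z] upper[of z] unfolding growth by (simp_all add: exp_minus field_simps)
  from entire_const_of_gaussian_two_sided_bound[OF G _ this] L
  have "((norm a)\<^sup>2 - 1) / 2 = 0" and "G constant_on UNIV"
    by simp_all
  then have "norm a = 1" and "G z = w 0" for z
    using power2_eq_1_iff[of "norm a"] norm_ge_zero[of a] unfolding constant_on_def
    by (auto simp: G_def) (metis exp_zero mult_1_right mult_zero_right)
  moreover have "w z = G z * exp (- (a * cnj b * z))" for z
    unfolding G_def by (simp add: mult.assoc exp_add[symmetric])
  ultimately have "w z = w 0 * exp (- cnj b * a * z)" for z
    by (simp add: mult_ac)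
  then show ?thesis
    using \<open>norm a = 1\<close> \<phi>_eq w0 by blast
qed

theorem proposition1p3:
  fixes \<nu> :: real and w \<phi> :: "complex \<Rightarrow> complex"
  assumes "1 \<le> \<nu>"
    and "w holomorphic_on UNIV" and "\<phi> holomorphic_on UNIV"
  shows "fock_invertible_op \<nu> (wcomp w \<phi>) \<longleftrightarrow>
         (\<exists>a b. norm a = 1 \<and> (\<forall>z. \<phi> z = a * z + b) \<and> w 0 \<noteq> 0 \<and>
                (\<forall>z. w z = w 0 * exp (- cnj b * a * z)))"
proof
  assume "fock_invertible_op \<nu> (wcomp w \<phi>)"
  then obtain S where T: "fock_bounded_op \<nu> (wcomp w \<phi>)" and S: "fock_bounded_op \<nu> S"
    and right_inverse: "\<And>f. f \<in> fock_space \<nu> \<Longrightarrow> wcomp w \<phi> (S f) = f"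
    unfolding fock_invertible_op_def by blast
  obtain U where "\<And>z. wcomp_growth w \<phi> z \<le> U"
    using wcomp_growth_bounded_above[OF assms(1) T] by blast
  moreover obtain L where "L > 0" "\<And>z. L \<le> wcomp_growth w \<phi> z"
    using wcomp_growth_bounded_below[OF assms(1) S right_inverse] by blast
  ultimately show "\<exists>a b. norm a = 1 \<and> (\<forall>z. \<phi> z = a * z + b) \<and> w 0 \<noteq> 0 \<and>
      (\<forall>z. w z = w 0 * exp (- cnj b * a * z))"
    using weyl_data_of_wcomp_growth_bounds[OF assms(2,3)] by blast
next
  assume "\<exists>a b. norm a = 1 \<and> (\<forall>z. \<phi> z = a * z + b) \<and> w 0 \<noteq> 0 \<and>
      (\<forall>z. w z = w 0 * exp (- cnj b * a * z))"
  then obtain a b where a: "norm a = 1" and "w 0 \<noteq> 0"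
    and "wcomp w \<phi> = wcomp (\<lambda>z. w 0 * exp (- cnj b * a * z)) (\<lambda>z. a * z + b)"
    unfolding wcomp_def by metis
  then show "fock_invertible_op \<nu> (wcomp w \<phi>)"
    using fock_invertible_op_weyl by simp
qed

end
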